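(* Let $(X,\langle\cdot,\cdot\rangle)$ be a real inner product space. For every $n\ge 2$, the $n$-iterated $2$-inner product $(\cdot,\cdot\mid\cdot,\ldots,\cdot)_*:X^{n+1}\to\mathbb{R}$ is a weak $n$-inner product on $X$.
   Context: The $n$-iterated $2$-inner product is defined recursively: for $n=2$, $(x,y\mid z)_*:=\langle x,y\rangle\langle z,z\rangle-\langle x,z\rangle\langle z,y\rangle$; for $n\ge3$ and $x,y,x_2,\ldots,x_n\in X$, $(x,y\mid x_n,\ldots,x_2)_*:=(x,y\mid x_{n-1},\ldots,x_2)_*\,(x_n,x_n\mid x_{n-1},\ldots,x_2)_*-(x,x_n\mid x_{n-1},\ldots,x_2)_*\,(x_n,y\mid x_{n-1},\ldots,x_2)_*$. A weak $n$-inner product ($n\ge2$) on a real vector space $X$ is a function $(\cdot,\cdot\mid\cdot,\ldots,\cdot):X^{n+1}\to\mathbb{R}$, written $(x,y\mid x_n,\ldots,x_2)$, such that for all $x,x',y,x_2,\ldots,x_n\in X$ and $\alpha\in\mathbb{R}$: (P1) $(x,x\mid x_n,\ldots,x_2)\ge 0$, with equality if and only if $x,x_2,\ldots,x_n$ are linearly dependent; (P2) $(x,x\mid x_n,\ldots,x_2)=(x_n,x_n\mid x,x_{n-1},\ldots,x_2)$; (P3) $(x,y\mid x_n,\ldots,x_2)=(y,x\mid x_n,\ldots,x_2)$; (P4) $(\alpha x,y\mid x_n,\ldots,x_2)=\alpha(x,y\mid x_n,\ldots,x_2)$; (P5) $(x+x',y\mid x_n,\ldots,x_2)=(x,y\mid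 x_n,\ldots,x_2)+(x',y\mid x_n,\ldots,x_2)$. *)

theory Defs
  imports "HOL-Analysis.Analysis"
begin

text \<open>The arguments x_2,...,x_n are given by a function v :: nat => 'a, using
  v 2, ..., v n (other values are irrelevant).  iter_ip n v x y stands for
  (x, y | x_n, ..., x_2)_* .  For n <= 2 the base case (n = 2) is used.\<close>

fun iter_ip :: "nat \<Rightarrow> (nat \<Rightarrow> 'a::real_inner) \<Rightarrow> 'a \<Rightarrow> 'a \<Rightarrow> real" where
  "iter_ip (Suc (Suc (Suc m))) v x y =
     iter_ip (Suc (Suc m)) v x y * iter_ip (Suc (Suc m)) v (v (Suc (Suc (Suc m)))) (v (Suc (Suc (Suc m))))
   - iter_ip (Suc (Suc m)) v x (v (Suc (Suc (Suc m)))) * iter_ip (Suc (Suc m)) v (v (Suc (Suc (Suc m)))) y"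
| "iter_ip _ v x y = inner x y * inner (v 2) (v 2) - inner x (v 2) * inner (v 2) y"

text \<open>x, x_2, ..., x_n linearly dependent (as a family, repetitions allowed):
  w 1 = x, w i = v i for 2 <= i <= n.\<close>
definition lin_dep_family :: "nat \<Rightarrow> 'a::real_vector \<Rightarrow> (nat \<Rightarrow> 'a) \<Rightarrow> bool" where
  "lin_dep_family n x v \<longleftrightarrow>
     (\<exists>c :: nat \<Rightarrow> real. (\<exists>i\<in>{1..n}. c i \<noteq> 0) \<and>
        (\<Sum>i=1..n. c i *\<^sub>R ((v(1 := x)) i)) = 0)"

text \<open>F n v x y stands for (x, y | x_n, ..., x_2) with x_i = v i.\<close>
definition weak_n_inner_product :: "nat \<Rightarrow> ((nat \<Rightarrow> 'a::real_vector) \<Rightarrow> 'a \<Rightarrow> 'a \<Rightarrow> real) \<Rightarrow> bool" where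
  "weak_n_inner_product n F \<longleftrightarrow> 2 \<le> n \<and>
     (\<forall>v x. F v x x \<ge> 0 \<and> (F v x x = 0 \<longleftrightarrow> lin_dep_family n x v)) \<and>
     (\<forall>v x. F v x x = F (v(n := x)) (v n) (v n)) \<and>
     (\<forall>v x y. F v x y = F v y x) \<and>
     (\<forall>v x y (a::real). F v (a *\<^sub>R x) y = a * F v x y) \<and>
     (\<forall>v x x' y. F v (x + x') y = F v x y + F v x' y)"

end

theory Submission
  imports Defs
begin

text \<open>Each step of the recursion takes a positive semidefinite symmetric bilinear form \<open>B\<close>
  to the 2-inner product \<open>(x, y | z) = B x y B z z - B x z B z y\<close> over \<open>B\<close>. By Cauchy-Schwarz
  this is again positive semidefinite, and completing the square,
  \<open>B z z B (x - t z) (x - t z) = (x, x | z) + (t B z z - B x z)\<^sup>2\<close>, shows that \<open>(x, x | z) = 0\<close>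
  exactly when \<open>z\<close> is \<open>B\<close>-null or some \<open>x - t z\<close> is \<open>B\<close>-null. The family \<open>x, x\<^sub>2, \<dots>, x\<^sub>k, z\<close>
  is linearly dependent under the same condition with "null" replaced by "dependent together
  with \<open>x\<^sub>2, \<dots>, x\<^sub>k\<close>", so induction on \<open>n\<close> identifies the null vectors of the iterated
  product, starting from the inner product, whose only null vector is 0.\<close>

locale psd_form =
  fixes B :: "'a::real_vector \<Rightarrow> 'a \<Rightarrow> real"
  assumes sym: "B x y = B y x"
    and scaleR_left: "B (a *\<^sub>R x) y = a * B x y"
    and add_left: "B (x + x') y = B x y + B x' y"
    and nonneg: "0 \<le> B x x"
begin

lemma scaleR_right: "B y (a *\<^sub>R x) = a * B y x"
  by (metis sym scaleR_left)

lemma diff_left: "B (x - x') y = B x y - B x' y"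
  by (metis add_left scaleR_left diff_conv_add_uminus scaleR_minus1_left mult_minus1 uminus_add_conv_diff)

lemma diff_right: "B y (x - x') = B y x - B y x'"
  by (metis sym diff_left)

lemma diag_diff_scaleR:
  "B (x - t *\<^sub>R z) (x - t *\<^sub>R z) = B x x - 2 * t * B x z + t\<^sup>2 * B z z"
  by (simp add: diff_left diff_right scaleR_left scaleR_right sym[of z x]
      power2_eq_square algebra_simps)

lemma cauchy_schwarz: "(B x z)\<^sup>2 \<le> B x x * B z z"
proof (cases "B z z = 0")
  case True
  show ?thesis
  proof (rule ccontr)
    assume "\<not> ?thesis"
    then have "B x z \<noteq> 0" using True by simp
    define t where "t = (B x x + 1) / (2 * B x z)"
    have "0 \<le> B (x - t *\<^sub>R z) (x - t *\<^sub>R z)" by (rule nonneg)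
    also have "\<dots> = -1" using True \<open>B x z \<noteq> 0\<close> by (simp add: diag_diff_scaleR t_def field_simps)
    finally show False by simp
  qed
next
  case False
  then have pos: "0 < B z z" using nonneg[of z] by simp
  have "0 \<le> B (x - (B x z / B z z) *\<^sub>R z) (x - (B x z / B z z) *\<^sub>R z)" by (rule nonneg)
  also have "\<dots> = B x x - (B x z)\<^sup>2 / B z z"
    using pos by (simp add: diag_diff_scaleR field_simps power2_eq_square)
  finally show ?thesis using pos by (simp add: field_simps)
qed

lemma null_left: "B w w = 0 \<Longrightarrow> B w y = 0"
  using cauchy_schwarz[of w y] nonneg[of y] by simp

end

lemma psd_form_inner: "psd_form (inner :: 'a::real_inner \<Rightarrow> 'a \<Rightarrow> real)"
  by unfold_locales (simp_all add: inner_add_left inner_add_right inner_commute)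

definition two_inner :: "('a \<Rightarrow> 'a \<Rightarrow> real) \<Rightarrow> 'a \<Rightarrow> 'a \<Rightarrow> 'a \<Rightarrow> real" where
  "two_inner B z x y = B x y * B z z - B x z * B z y"

context psd_form
begin

lemma psd_form_two_inner: "psd_form (two_inner B z)"
proof
  fix x y x' :: 'a and a :: real
  show "two_inner B z x y = two_inner B z y x"
    by (simp add: two_inner_def sym[of x y] sym[of z y] sym[of x z] mult.commute)
  show "two_inner B z (a *\<^sub>R x) y = a * two_inner B z x y"
    by (simp add: two_inner_def scaleR_left algebra_simps)
  show "two_inner B z (x + x') y = two_inner B z x y + two_inner B z x' y"
    by (simp add: two_inner_def add_left algebra_simps)
  show "0 \<le> two_inner B z x x"
    using cauchy_schwarz[of x z] by (simp add: two_inner_def sym[of z x] power2_eq_square)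
qed

lemma two_inner_swap: "two_inner B z x x = two_inner B x z z"
  by (simp add: two_inner_def sym[of z x] mult.commute)

lemma completing_square:
  "B z z * B (x - t *\<^sub>R z) (x - t *\<^sub>R z) = two_inner B z x x + (t * B z z - B x z)\<^sup>2"
  by (simp add: diag_diff_scaleR two_inner_def sym[of z x] power2_eq_square algebra_simps)

lemma two_inner_diag_eq_0_iff:
  "two_inner B z x x = 0 \<longleftrightarrow> B z z = 0 \<or> (\<exists>t. B (x - t *\<^sub>R z) (x - t *\<^sub>R z) = 0)"
proof
  assume x: "two_inner B z x x = 0"
  show "B z z = 0 \<or> (\<exists>t. B (x - t *\<^sub>R z) (x - t *\<^sub>R z) = 0)"
  proof (cases "B z z = 0")
    case False
    then have "B z z * B (x - (B x z / B z z) *\<^sub>R z) (x - (B x z / B z z) *\<^sub>R z) = 0"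
      using x by (simp add: completing_square)
    with False show ?thesis by auto
  qed simp
next
  have "two_inner B z x x \<ge> 0"
    using psd_form.nonneg[OF psd_form_two_inner] .
  moreover assume "B z z = 0 \<or> (\<exists>t. B (x - t *\<^sub>R z) (x - t *\<^sub>R z) = 0)"
  then have "two_inner B z x x \<le> 0"
  proof (elim disjE exE)
    assume "B z z = 0"
    then show ?thesis using null_left[of z x] by (simp add: two_inner_def)
  next
    fix t
    assume "B (x - t *\<^sub>R z) (x - t *\<^sub>R z) = 0"
    then have "two_inner B z x x + (t * B z z - B x z)\<^sup>2 = 0"
      using completing_square[of z x t] by simp
    then show ?thesis using zero_le_power2[of "t * B z z - B x z"] by linarith
  qed
  ultimately show "two_inner B z x x = 0" by simp
qed

end

lemma lin_dep_family_iff: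
  assumes "1 \<le> k"
  shows "lin_dep_family k x v \<longleftrightarrow>
    (\<exists>c. (\<exists>i\<in>{1..k}. c i \<noteq> 0) \<and> c 1 *\<^sub>R x + (\<Sum>i=2..k. c i *\<^sub>R v i) = 0)"
proof -
  have "(\<Sum>i=1..k. c i *\<^sub>R (v(1 := x)) i) = c 1 *\<^sub>R x + (\<Sum>i=2..k. c i *\<^sub>R v i)" for c
  proof -
    have "(\<Sum>i=1..k. c i *\<^sub>R (v(1 := x)) i) = c 1 *\<^sub>R x + (\<Sum>i=Suc 1..k. c i *\<^sub>R (v(1 := x)) i)"
      using assms by (simp add: sum.atLeast_Suc_atMost)
    also have "(\<Sum>i=Suc 1..k. c i *\<^sub>R (v(1 := x)) i) = (\<Sum>i=2..k. c i *\<^sub>R v i)"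
      by (rule sum.cong) auto
    finally show ?thesis .
  qed
  then show ?thesis by (simp add: lin_dep_family_def)
qed

lemma lin_dep_family_1: "lin_dep_family 1 x v \<longleftrightarrow> x = 0"
  by (auto simp: lin_dep_family_iff)

lemma lin_dep_family_Suc_iff:
  assumes "1 \<le> k"
  shows "lin_dep_family (Suc k) x v \<longleftrightarrow> (\<exists>c. (\<exists>i\<in>{1..Suc k}. c i \<noteq> 0) \<and>
    c 1 *\<^sub>R x + (\<Sum>i=2..k. c i *\<^sub>R v i) + c (Suc k) *\<^sub>R v (Suc k) = 0)"
proof -
  have "(\<Sum>i=2..Suc k. c i *\<^sub>R v i) = (\<Sum>i=2..k. c i *\<^sub>R v i) + c (Suc k) *\<^sub>R v (Suc k)" for c
    using assms by (simp add: sum.cl_ivl_Suc)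
  then show ?thesis
    by (simp only: lin_dep_family_iff[of "Suc k"] le_SucI[OF assms] add.assoc simp_thms)
qed

lemma sum_coeffs_fun_upd_outside:
  "(\<Sum>i=2..k. (c(1 := a, Suc k := b)) i *\<^sub>R v i) = (\<Sum>i=2..k. c i *\<^sub>R v i)"
  by (rule sum.cong) auto

lemma lin_dep_family_SucD:
  fixes v :: "nat \<Rightarrow> 'a::real_vector"
  assumes k: "1 \<le> k" and "lin_dep_family (Suc k) x v"
  shows "lin_dep_family k (v (Suc k)) v \<or> (\<exists>t. lin_dep_family k (x - t *\<^sub>R v (Suc k)) v)"
proof -
  let ?z = "v (Suc k)" and ?R = "\<lambda>c. \<Sum>i=2..k. c i *\<^sub>R v i"
  obtain c i where c: "c 1 *\<^sub>R x + ?R c + c (Suc k) *\<^sub>R ?z = 0"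
    and i: "i \<in> {1..Suc k}" "c i \<noteq> 0"
    using assms by (auto simp: lin_dep_family_Suc_iff)
  show ?thesis
  proof (cases "c 1 = 0")
    case True
    let ?d = "c(1 := c (Suc k), Suc k := c (Suc k))"
    have "?d 1 *\<^sub>R ?z + ?R ?d = 0"
      using c True k by (simp add: sum_coeffs_fun_upd_outside add.commute)
    moreover have "\<exists>j\<in>{1..k}. ?d j \<noteq> 0"
      using i True k by (cases "i = Suc k") (auto intro: bexI[of _ 1] bexI[of _ i])
    ultimately show ?thesis using k by (auto simp: lin_dep_family_iff)
  next
    case False
    have "c 1 *\<^sub>R (x - (- c (Suc k) / c 1) *\<^sub>R ?z) + ?R c = 0"
      using c False by (simp add: algebra_simps)
    then have "lin_dep_family k (x - (- c (Suc k) / c 1) *\<^sub>R ?z) v"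
      unfolding lin_dep_family_iff[OF k] using False k
      by (intro exI[of _ c] conjI bexI[of _ 1]) auto
    then show ?thesis by blast
  qed
qed

lemma lin_dep_family_SucI:
  fixes v :: "nat \<Rightarrow> 'a::real_vector"
  assumes k: "1 \<le> k"
    and "lin_dep_family k (v (Suc k)) v \<or> (\<exists>t. lin_dep_family k (x - t *\<^sub>R v (Suc k)) v)"
  shows "lin_dep_family (Suc k) x v"
  using assms(2)
proof (elim disjE exE)
  let ?z = "v (Suc k)" and ?R = "\<lambda>c. \<Sum>i=2..k. c i *\<^sub>R v i"
  assume "lin_dep_family k ?z v"
  then obtain c i where c: "c 1 *\<^sub>R ?z + ?R c = 0" and i: "i \<in> {1..k}" "c i \<noteq> 0"
    using k by (auto simp: lin_dep_family_iff)
  let ?d = "c(1 := 0, Suc k := c 1)"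
  have "?d 1 *\<^sub>R x + ?R ?d + ?d (Suc k) *\<^sub>R ?z = 0"
    using c k by (simp add: sum_coeffs_fun_upd_outside add.commute)
  moreover have "\<exists>j\<in>{1..Suc k}. ?d j \<noteq> 0"
    using i k by (cases "i = 1") (auto intro: bexI[of _ "Suc k"] bexI[of _ i])
  ultimately show ?thesis using k by (auto simp: lin_dep_family_Suc_iff)
next
  let ?z = "v (Suc k)" and ?R = "\<lambda>c. \<Sum>i=2..k. c i *\<^sub>R v i"
  fix t
  assume "lin_dep_family k (x - t *\<^sub>R ?z) v"
  then obtain c i where c: "c 1 *\<^sub>R (x - t *\<^sub>R ?z) + ?R c = 0" and i: "i \<in> {1..k}" "c i \<noteq> 0"
    using k by (auto simp: lin_dep_family_iff)
  let ?d = "c(1 := c 1, Suc k := - c 1 * t)"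
  have "?d 1 *\<^sub>R x + ?R ?d + ?d (Suc k) *\<^sub>R ?z = 0"
    using c k by (simp add: sum_coeffs_fun_upd_outside algebra_simps)
  moreover have "\<exists>j\<in>{1..Suc k}. ?d j \<noteq> 0" using i by (auto intro: bexI[of _ i])
  ultimately show ?thesis using k by (auto simp: lin_dep_family_Suc_iff)
qed

lemma lin_dep_family_Suc:
  "1 \<le> k \<Longrightarrow> lin_dep_family (Suc k) x v \<longleftrightarrow>
    lin_dep_family k (v (Suc k)) v \<or> (\<exists>t. lin_dep_family k (x - t *\<^sub>R v (Suc k)) v)"
  using lin_dep_family_SucD lin_dep_family_SucI by blast

lemma two_inner_null_iff_lin_dep_family:
  fixes v :: "nat \<Rightarrow> 'a::real_vector"
  assumes "psd_form B" and "1 \<le> k"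
    and null_iff: "\<And>y. B y y = 0 \<longleftrightarrow> lin_dep_family k y v"
  shows "two_inner B (v (Suc k)) x x = 0 \<longleftrightarrow> lin_dep_family (Suc k) x v"
  by (simp add: psd_form.two_inner_diag_eq_0_iff[OF assms(1)] lin_dep_family_Suc[OF assms(2)] null_iff)

lemma iter_ip_2: "iter_ip 2 v = two_inner inner (v 2)"
  by (simp add: numeral_2_eq_2 two_inner_def fun_eq_iff)

lemma iter_ip_Suc:
  assumes "2 \<le> k"
  shows "iter_ip (Suc k) v = two_inner (iter_ip k v) (v (Suc k))"
proof -
  obtain m where "k = Suc (Suc m)" using assms by (metis add_2_eq_Suc le_iff_add)
  then show ?thesis by (simp add: two_inner_def fun_eq_iff)
qed

lemma iter_ip_fun_upd: "2 \<le> k \<Longrightarrow> k < j \<Longrightarrow> iter_ip k (v(j := a)) = iter_ip k v"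
  by (induction k rule: nat_induct_at_least) (simp_all add: iter_ip_2 iter_ip_Suc)

lemma iter_ip_psd_form_and_null_iff:
  fixes v :: "nat \<Rightarrow> 'a::real_inner"
  assumes "2 \<le> n"
  shows "psd_form (iter_ip n v) \<and> (\<forall>x. iter_ip n v x x = 0 \<longleftrightarrow> lin_dep_family n x v)"
  using assms
proof (induction n rule: nat_induct_at_least)
  case base
  have "inner y y = 0 \<longleftrightarrow> lin_dep_family 1 y v" for y :: 'a
    using lin_dep_family_1[of y v] by simp
  from two_inner_null_iff_lin_dep_family[OF psd_form_inner _ this]
  show ?case
    using psd_form.psd_form_two_inner[OF psd_form_inner] unfolding iter_ip_2 Suc_1 by simp
next
  case (Suc n)
  then show ?case
    using two_inner_null_iff_lin_dep_family[of "iter_ip n v" n v]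
    by (simp add: iter_ip_Suc psd_form.psd_form_two_inner)
qed

lemma iter_ip_diag_swap:
  fixes v :: "nat \<Rightarrow> 'a::real_inner"
  assumes "2 \<le> n"
  shows "iter_ip n v x x = iter_ip n (v(n := x)) (v n) (v n)"
proof (cases "n = 2")
  case True
  then show ?thesis
    by (simp add: iter_ip_2 psd_form.two_inner_swap[OF psd_form_inner])
next
  case False
  then obtain k where n: "n = Suc k" and k: "2 \<le> k" using assms
    by (metis Suc_le_D le_antisym not_less_eq_eq)
  have "psd_form (iter_ip k v)" using iter_ip_psd_form_and_null_iff k by blast
  then show ?thesis
    by (simp add: n iter_ip_Suc[OF k] iter_ip_fun_upd[OF k] psd_form.two_inner_swap)
qed

theorem theorem2p4:
  fixes n :: nat
  assumes "2 \<le> n"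
  shows "weak_n_inner_product n (iter_ip n :: (nat \<Rightarrow> 'a::real_inner) \<Rightarrow> 'a \<Rightarrow> 'a \<Rightarrow> real)"
proof -
  have psd: "psd_form (iter_ip n v)"
    and null_iff: "iter_ip n v x x = 0 \<longleftrightarrow> lin_dep_family n x v" for v :: "nat \<Rightarrow> 'a" and x
    using iter_ip_psd_form_and_null_iff[OF assms] by blast+
  show ?thesis
    unfolding weak_n_inner_product_def
  proof (intro conjI allI)
    fix v :: "nat \<Rightarrow> 'a" and x y x' :: 'a and a :: real
    show "0 \<le> iter_ip n v x x" by (rule psd_form.nonneg[OF psd])
    show "iter_ip n v x x = 0 \<longleftrightarrow> lin_dep_family n x v" by (rule null_iff)
    show "iter_ip n v x x = iter_ip n (v(n := x)) (v n) (v n)" by (rule iter_ip_diag_swap[OF assms])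
    show "iter_ip n v x y = iter_ip n v y x" by (rule psd_form.sym[OF psd])
    show "iter_ip n v (a *\<^sub>R x) y = a * iter_ip n v x y" by (rule psd_form.scaleR_left[OF psd])
    show "iter_ip n v (x + x') y = iter_ip n v x y + iter_ip n v x' y"
      by (rule psd_form.add_left[OF psd])
  qed (rule assms)
qed

end
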